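(* Let $\Sigma$ be a finite nonempty set and let $\{(A_i,B_i)\in\mathbb{R}^{n\times n}\times\mathbb{R}^{n\times m} : i\in\Sigma\}$ be given. The switched control system $x(k+1)=A_{\sigma(k)}x(k)+B_{\sigma(k)}u(k)$ is mode-dependent feedback stabilizable (DFS) if and only if it is current-mode-dependent memory-feedback stabilizable (DFS$_m$).
   Context: Let $\Sigma$ be a finite nonempty set (alphabet) and $\{(A_i,B_i)\in\mathbb{R}^{n\times n}\times\mathbb{R}^{n\times m} : i\in\Sigma\}$. Consider the discrete-time switched control system $x(k+1)=A_{\sigma(k)}x(k)+B_{\sigma(k)}u(k)$, $k\in\mathbb{N}=\{0,1,2,\dots\}$, where the switching signal $\sigma:\mathbb{N}\to\Sigma$ is arbitrary (the set of all such signals is denoted $\Sigma^\omega$) and $u(k)\in\mathbb{R}^m$ is the control. $\|\cdot\|$ is the Euclidean norm. Let $\mathcal{H}$ be the set of all tuples $(x_k,\dots,x_0;\,i_k,\dots,i_0)$ with $k\in\mathbb{N}$, $x_j\in\mathbb{R}^n$, $i_j\in\Sigma$ (state string and mode string of equal length $k+1$), and let $\mathcal{H}_-$ be the set of all tuples $(x_k,\dots,x_0;\,i_{k-1},\dots,i_0)$ with $k\in\mathbb{N}$ (mode string one shorter than the state string; empty when $k=0$). Controllers are arbitrary functions (no regularity assumed) of the following kinds, each determining, for every $x_0\in\mathbb{R}^n$ and $\sigma\in\Sigma^\omega$, a unique closed-loop trajectory with $x(0)=x_0$: (1) static mode-independent $\Phi:\mathbb{R}^n\to\mathbb{R}^m$,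 with $u(k)=\Phi(x(k))$; (1)$^d$ static mode-dependent $\Phi_d:\Sigma\times\mathbb{R}^n\to\mathbb{R}^m$, with $u(k)=\Phi_d(\sigma(k),x(k))$; (2) current-mode-independent with memory $\Psi:\mathcal{H}_-\to\mathbb{R}^m$, with $u(k)=\Psi(x(k),\dots,x(0);\,\sigma(k-1),\dots,\sigma(0))$; (2)$^d$ current-mode-dependent with memory $\Psi_d:\mathcal{H}\to\mathbb{R}^m$, with $u(k)=\Psi_d(x(k),\dots,x(0);\,\sigma(k),\dots,\sigma(0))$. The closed loop is uniformly exponentially stable (UES) if there exist $M>0$ and $\gamma\in[0,1)$ such that $\|x(k)\|\le M\gamma^k\|x_0\|$ for all $x_0\in\mathbb{R}^n$, all $\sigma\in\Sigma^\omega$ and all $k\in\mathbb{N}$. The system is called IFS, DFS, IFS$_m$, DFS$_m$ if there exists a controller of kind (1), (1)$^d$, (2), (2)$^d$ respectively such that the closed loop is UES. *)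

theory Defs
  imports "HOL-Analysis.Analysis"
begin

text \<open>Modes: a finite (nonempty, as every type) type 'i.  States: real^'n, controls: real^'m.
  A i :: real^'n^'n (n x n), B i :: real^'m^'n (n x m), so A i *v x, B i *v u :: real^'n.\<close>

primrec traj_static ::
  "('i \<Rightarrow> real^'n^'n) \<Rightarrow> ('i \<Rightarrow> real^'m^'n) \<Rightarrow> ('i \<Rightarrow> real^'n \<Rightarrow> real^'m)
   \<Rightarrow> real^'n \<Rightarrow> (nat \<Rightarrow> 'i) \<Rightarrow> nat \<Rightarrow> real^'n" where
  "traj_static A B Phi x0 \<sigma> 0 = x0"
| "traj_static A B Phi x0 \<sigma> (Suc k) =
     A (\<sigma> k) *v traj_static A B Phi x0 \<sigma> k
     + B (\<sigma> k) *v Phi (\<sigma> k) (traj_static A B Phi x0 \<sigma> k)"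

text \<open>Closed-loop state history [x(k), ..., x(0)] (most recent first) under a
  current-mode-dependent memory controller Psi_d, which receives the state string
  x(k),...,x(0) and the mode string sigma(k),...,sigma(0) (both most recent first).\<close>
primrec hist_mem ::
  "('i \<Rightarrow> real^'n^'n) \<Rightarrow> ('i \<Rightarrow> real^'m^'n) \<Rightarrow> ((real^'n) list \<Rightarrow> 'i list \<Rightarrow> real^'m)
   \<Rightarrow> real^'n \<Rightarrow> (nat \<Rightarrow> 'i) \<Rightarrow> nat \<Rightarrow> (real^'n) list" where
  "hist_mem A B Psi x0 \<sigma> 0 = [x0]"
| "hist_mem A B Psi x0 \<sigma> (Suc k) =
     (let h = hist_mem A B Psi x0 \<sigma> k
      in (A (\<sigma> k) *v hd h + B (\<sigma> k) *v Psi h (map \<sigma> (rev [0..<Suc k]))) # h)"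

definition traj_mem ::
  "('i \<Rightarrow> real^'n^'n) \<Rightarrow> ('i \<Rightarrow> real^'m^'n) \<Rightarrow> ((real^'n) list \<Rightarrow> 'i list \<Rightarrow> real^'m)
   \<Rightarrow> real^'n \<Rightarrow> (nat \<Rightarrow> 'i) \<Rightarrow> nat \<Rightarrow> real^'n" where
  "traj_mem A B Psi x0 \<sigma> k = hd (hist_mem A B Psi x0 \<sigma> k)"

definition UES :: "(real^'n \<Rightarrow> (nat \<Rightarrow> 'i) \<Rightarrow> nat \<Rightarrow> real^'n) \<Rightarrow> bool" where
  "UES X \<longleftrightarrow> (\<exists>M::real. M > 0 \<and> (\<exists>\<gamma>::real. 0 \<le> \<gamma> \<and> \<gamma> < 1 \<and>
     (\<forall>x0 \<sigma> k. norm (X x0 \<sigma> k) \<le> M * \<gamma> ^ k * norm x0)))"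

definition DFS :: "('i \<Rightarrow> real^'n^'n) \<Rightarrow> ('i \<Rightarrow> real^'m^'n) \<Rightarrow> bool" where
  "DFS A B \<longleftrightarrow> (\<exists>Phi. UES (traj_static A B Phi))"

definition DFS_m :: "('i \<Rightarrow> real^'n^'n) \<Rightarrow> ('i \<Rightarrow> real^'m^'n) \<Rightarrow> bool" where
  "DFS_m A B \<longleftrightarrow> (\<exists>Psi. UES (traj_mem A B Psi))"

end

theory Submission
  imports Defs
begin

text \<open>A static mode-dependent feedback is a memory feedback that only reads the current state and
  mode. Conversely, let a memory feedback satisfy the bound \<open>M \<gamma>\<^sup>k \<bar>x\<^sub>0\<bar>\<close> and let \<open>V x\<close> be the infimum
  of the constants \<open>c\<close> such that some memory feedback keeps every trajectory from \<open>x\<close> below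
  \<open>c \<gamma>\<^sup>k\<close>. Then \<open>\<bar>x\<bar> \<le> V x \<le> M \<bar>x\<bar>\<close>. A memory feedback started at \<open>x\<close> can be restarted after
  its first step in any mode \<open>i\<close>, with the first state and mode kept in its memory; hence for
  every \<open>i\<close> some control \<open>u\<close> brings \<open>V (A\<^sub>i x + B\<^sub>i u)\<close> arbitrarily close to \<open>\<gamma> V x\<close>. Choosing
  such a \<open>u\<close> pointwise with contraction factor \<open>\<mu> \<in> (\<gamma>, 1)\<close> is a static feedback under which \<open>V\<close>
  decays like \<open>\<mu>\<^sup>k\<close>.\<close>

lemma hist_mem_not_Nil: "hist_mem A B Psi x0 \<sigma> k \<noteq> []"
  by (cases k) (auto simp: Let_def)

lemma traj_mem_current_feedback:
  "traj_mem A B (\<lambda>h ms. Phi (hd ms) (hd h)) x0 \<sigma> k = traj_static A B Phi x0 \<sigma> k"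
proof (induction k)
  case 0
  then show ?case by (simp add: traj_mem_def)
next
  case (Suc k)
  have "hd (map \<sigma> (rev [0..<Suc k])) = \<sigma> k" by simp
  with Suc show ?case by (simp add: traj_mem_def Let_def del: upt_Suc)
qed

lemma DFS_imp_DFS_m:
  assumes "DFS A B"
  shows "DFS_m A B"
proof -
  obtain Phi where "UES (traj_static A B Phi)"
    using assms unfolding DFS_def by blast
  then have "UES (traj_mem A B (\<lambda>h ms. Phi (hd ms) (hd h)))"
    by (simp add: traj_mem_current_feedback[abs_def])
  then show ?thesis unfolding DFS_m_def by blast
qed

lemma map_rev_upt_shift:
  "map (\<lambda>n. if n = 0 then i else \<sigma> (n - 1)) (rev [0..<Suc n]) = map \<sigma> (rev [0..<n]) @ [i]"
  by (induction n) auto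

lemma hist_mem_shift:
  "hist_mem A B Psi x (\<lambda>n. if n = 0 then i else \<sigma> (n - 1)) (Suc k)
       = hist_mem A B (\<lambda>h ms. Psi (h @ [x]) (ms @ [i])) (A i *v x + B i *v Psi [x] [i]) \<sigma> k @ [x]"
proof (induction k)
  case 0
  then show ?case by (simp add: Let_def)
next
  case (Suc k)
  have "hist_mem A B (\<lambda>h ms. Psi (h @ [x]) (ms @ [i])) (A i *v x + B i *v Psi [x] [i]) \<sigma> k \<noteq> []"
    by (rule hist_mem_not_Nil)
  with Suc show ?case
    by (simp only: hist_mem.simps(2) map_rev_upt_shift) (simp add: Let_def del: upt_Suc)
qed

lemma traj_mem_shift:
  "traj_mem A B (\<lambda>h ms. Psi (h @ [x]) (ms @ [i])) (A i *v x + B i *v Psi [x] [i]) \<sigma> k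
     = traj_mem A B Psi x (\<lambda>n. if n = 0 then i else \<sigma> (n - 1)) (Suc k)"
  unfolding traj_mem_def hist_mem_shift by (metis hd_append hist_mem_not_Nil)

definition mem_decay_bound ::
  "('i \<Rightarrow> real^'n^'n) \<Rightarrow> ('i \<Rightarrow> real^'m^'n) \<Rightarrow> real \<Rightarrow> real^'n \<Rightarrow> real \<Rightarrow> bool" where
  "mem_decay_bound A B \<gamma> x c \<longleftrightarrow>
     (\<exists>Psi. \<forall>\<sigma> k. norm (traj_mem A B Psi x \<sigma> k) \<le> c * \<gamma> ^ k)"

definition mem_value ::
  "('i \<Rightarrow> real^'n^'n) \<Rightarrow> ('i \<Rightarrow> real^'m^'n) \<Rightarrow> real \<Rightarrow> real^'n \<Rightarrow> real" where
  "mem_value A B \<gamma> x = Inf {c. mem_decay_bound A B \<gamma> x c}"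

lemma norm_le_mem_decay_bound: "mem_decay_bound A B \<gamma> x c \<Longrightarrow> norm x \<le> c"
  unfolding mem_decay_bound_def by (metis traj_mem_def hist_mem.simps(1) list.sel(1) mult_1_right power_0)

lemma mem_decay_bound_step:
  assumes "mem_decay_bound A B \<gamma> x c"
  shows "\<exists>u. mem_decay_bound A B \<gamma> (A i *v x + B i *v u) (\<gamma> * c)"
proof -
  obtain Psi where Psi: "\<And>\<sigma> k. norm (traj_mem A B Psi x \<sigma> k) \<le> c * \<gamma> ^ k"
    using assms unfolding mem_decay_bound_def by blast
  have "norm (traj_mem A B (\<lambda>h ms. Psi (h @ [x]) (ms @ [i])) (A i *v x + B i *v Psi [x] [i]) \<sigma> k)
      \<le> \<gamma> * c * \<gamma> ^ k" for \<sigma> k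
    using Psi[of _ "Suc k"] by (simp add: traj_mem_shift algebra_simps)
  then show ?thesis unfolding mem_decay_bound_def by blast
qed

lemma mem_value_le: "mem_decay_bound A B \<gamma> x c \<Longrightarrow> mem_value A B \<gamma> x \<le> c"
  unfolding mem_value_def
  by (rule cInf_lower) (auto intro: bdd_belowI norm_le_mem_decay_bound)

lemma norm_le_mem_value:
  "mem_decay_bound A B \<gamma> x c \<Longrightarrow> norm x \<le> mem_value A B \<gamma> x"
  unfolding mem_value_def by (rule cInf_greatest) (auto intro: norm_le_mem_decay_bound)

lemma mem_value_step:
  assumes "mem_decay_bound A B \<gamma> x c" and "0 \<le> \<gamma>" and "\<epsilon> > 0"
  shows "\<exists>u. mem_value A B \<gamma> (A i *v x + B i *v u) \<le> \<gamma> * (mem_value A B \<gamma> x + \<epsilon>)"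
proof -
  have "mem_value A B \<gamma> x < mem_value A B \<gamma> x + \<epsilon>" using \<open>\<epsilon> > 0\<close> by simp
  then obtain c' where c': "mem_decay_bound A B \<gamma> x c'" "c' < mem_value A B \<gamma> x + \<epsilon>"
    unfolding mem_value_def using assms(1) by (metis (mono_tags) cInf_lessD empty_iff mem_Collect_eq)
  obtain u where "mem_decay_bound A B \<gamma> (A i *v x + B i *v u) (\<gamma> * c')"
    using mem_decay_bound_step[OF c'(1)] by blast
  then have "mem_value A B \<gamma> (A i *v x + B i *v u) \<le> \<gamma> * c'" by (rule mem_value_le)
  also have "\<dots> \<le> \<gamma> * (mem_value A B \<gamma> x + \<epsilon>)"
    using c'(2) \<open>0 \<le> \<gamma>\<close> by (simp add: mult_left_mono)
  finally show ?thesis by blast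
qed

lemma DFS_if_control_Lyapunov:
  fixes V :: "real^'n \<Rightarrow> real"
  assumes "0 \<le> \<mu>" "\<mu> < 1"
    and norm_le_V: "\<And>x. norm x \<le> V x"
    and V_le: "\<And>x. V x \<le> M * norm x"
    and decrease: "\<And>i x. \<exists>u. V (A i *v x + B i *v u) \<le> \<mu> * V x"
  shows "DFS A B"
proof -
  define Phi where "Phi i x = (SOME u. V (A i *v x + B i *v u) \<le> \<mu> * V x)" for i x
  have Phi: "V (A i *v x + B i *v Phi i x) \<le> \<mu> * V x" for i x
    unfolding Phi_def by (rule someI_ex[OF decrease])
  have V_traj: "V (traj_static A B Phi x0 \<sigma> k) \<le> \<mu> ^ k * V x0" for x0 \<sigma> k
  proof (induction k)
    case 0
    then show ?case by simp
  next
    case (Suc k)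
    have "V (traj_static A B Phi x0 \<sigma> (Suc k)) \<le> \<mu> * V (traj_static A B Phi x0 \<sigma> k)"
      using Phi by simp
    also have "\<dots> \<le> \<mu> * (\<mu> ^ k * V x0)" using Suc \<open>0 \<le> \<mu>\<close> by (rule mult_left_mono)
    finally show ?case by simp
  qed
  have traj_bound: "norm (traj_static A B Phi x0 \<sigma> k) \<le> max M 1 * \<mu> ^ k * norm x0" for x0 \<sigma> k
  proof -
    have "norm (traj_static A B Phi x0 \<sigma> k) \<le> \<mu> ^ k * V x0" using norm_le_V V_traj order.trans by blast
    also have "\<dots> \<le> \<mu> ^ k * (M * norm x0)" using V_le \<open>0 \<le> \<mu>\<close> by (simp add: mult_left_mono)
    also have "\<dots> \<le> \<mu> ^ k * (max M 1 * norm x0)"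
      using \<open>0 \<le> \<mu>\<close> by (simp add: mult_left_mono mult_right_mono)
    finally show ?thesis by (simp add: algebra_simps)
  qed
  have "UES (traj_static A B Phi)"
    unfolding UES_def using assms(1,2) traj_bound
    by (intro exI[of _ "max M 1"] conjI exI[of _ \<mu>] allI) simp_all
  then show ?thesis unfolding DFS_def by blast
qed

lemma mem_value_contraction:
  assumes bound: "\<And>x. mem_decay_bound A B \<gamma> x (M * norm x)"
    and "0 \<le> \<gamma>" "\<gamma> < \<mu>" "\<mu> \<le> 1"
  shows "\<exists>u. mem_value A B \<gamma> (A i *v x + B i *v u) \<le> \<mu> * mem_value A B \<gamma> x"
proof -
  let ?V = "mem_value A B \<gamma>"
  have norm_le_V: "norm y \<le> ?V y" for y by (rule norm_le_mem_value[OF bound])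
  show ?thesis
  proof (cases "?V x = 0")
    case True
    then have "x = 0" using norm_le_V[of x] by simp
    then show ?thesis using mem_value_le[OF bound, of 0] True by (intro exI[of _ 0]) simp
  next
    case False
    then have "?V x > 0" using norm_le_V[of x] norm_ge_zero[of x] by linarith
    with \<open>\<gamma> < \<mu>\<close> have "(\<mu> - \<gamma>) * ?V x > 0" by simp
    then obtain u where u: "?V (A i *v x + B i *v u) \<le> \<gamma> * (?V x + (\<mu> - \<gamma>) * ?V x)"
      using mem_value_step[OF bound \<open>0 \<le> \<gamma>\<close>] by blast
    have "0 \<le> (\<mu> - \<gamma>) * (1 - \<gamma>) * ?V x"
      using \<open>?V x > 0\<close> assms(3,4) by (intro mult_nonneg_nonneg) simp_all
    then have "\<gamma> * (?V x + (\<mu> - \<gamma>) * ?V x) \<le> \<mu> * ?V x"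
      by (simp add: algebra_simps)
    with u have "?V (A i *v x + B i *v u) \<le> \<mu> * ?V x" by linarith
    then show ?thesis by blast
  qed
qed

lemma DFS_m_imp_DFS:
  assumes "DFS_m A B"
  shows "DFS A B"
proof -
  obtain Psi M \<gamma> where "0 \<le> \<gamma>" "\<gamma> < 1"
    and Psi: "\<And>x0 \<sigma> k. norm (traj_mem A B Psi x0 \<sigma> k) \<le> M * \<gamma> ^ k * norm x0"
    using assms unfolding DFS_m_def UES_def by blast
  have bound: "mem_decay_bound A B \<gamma> x (M * norm x)" for x
    unfolding mem_decay_bound_def using Psi by (intro exI[of _ Psi] allI) (simp add: mult_ac)
  define \<mu> where "\<mu> = (1 + \<gamma>) / 2"
  have \<mu>: "0 \<le> \<mu>" "\<gamma> < \<mu>" "\<mu> < 1" using \<open>0 \<le> \<gamma>\<close> \<open>\<gamma> < 1\<close> by (auto simp: \<mu>_def)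
  show ?thesis
  proof (rule DFS_if_control_Lyapunov)
    show "norm x \<le> mem_value A B \<gamma> x" for x by (rule norm_le_mem_value[OF bound])
    show "mem_value A B \<gamma> x \<le> M * norm x" for x by (rule mem_value_le[OF bound])
    show "\<exists>u. mem_value A B \<gamma> (A i *v x + B i *v u) \<le> \<mu> * mem_value A B \<gamma> x" for i x
      using bound \<open>0 \<le> \<gamma>\<close> \<mu> by (intro mem_value_contraction) auto
  qed (use \<mu> in auto)
qed

theorem theorem1:
  fixes A :: "'i::finite \<Rightarrow> real^'n^'n" and B :: "'i \<Rightarrow> real^'m^'n"
  shows "DFS A B \<longleftrightarrow> DFS_m A B"
  using DFS_imp_DFS_m DFS_m_imp_DFS by blast

end
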